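(* Let $X$ be a Minkowski plane and $\mathbf{a}_1,\mathbf{a}_2,\mathbf{a}_3\in X\setminus\{\mathbf{o}\}$. The configuration $\{\mathbf{o}\mathbf{a}_1,\mathbf{o}\mathbf{a}_2,\mathbf{o}\mathbf{a}_3\}$ is a floating FT configuration if and only if it is not pointed and all angles $\sphericalangle\mathbf{a}_i\mathbf{o}\mathbf{a}_j$ ($i\neq j$) are critical.
   Context: A Minkowski plane is a two-dimensional real normed space $(X,\|\cdot\|)$. A Fermat-Torricelli (FT) point of finitely many points $\mathbf{x}_1,\dots,\mathbf{x}_n$ is a minimizer of $\mathbf{x}\mapsto\sum_i\|\mathbf{x}-\mathbf{x}_i\|$. A configuration $\{\mathbf{x}_0\mathbf{x}_i: i=1,\dots,n\}$ (segments from $\mathbf{x}_0$ with $\mathbf{x}_i\neq\mathbf{x}_0$) is a floating FT configuration if $\mathbf{x}_0$ is an FT point of $\{\mathbf{x}_1,\dots,\mathbf{x}_n\}$. It is pointed if there is a line $H$ through $\mathbf{x}_0$ such that the relative interiors of all segments $\mathbf{x}_0\mathbf{x}_i$ lie in the same open half-plane bounded by $H$. The angle $\sphericalangle\mathbf{x}_1\mathbf{x}_0\mathbf{x}_2$ is the convex cone bounded by the rays from $\mathbf{x}_0$ through $\mathbf{x}_1$ and through $\mathbf{x}_2$; it is critical if there exists a point $\mathbf{x}_3\neq\mathbf{x}_0$ such that $\mathbf{x}_0$ is an FT point of $\{\mathbf{x}_1,\mathbf{x}_2,\mathbf{x}_3\}$. *)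

theory Defs
  imports "HOL-Analysis.Analysis"
begin

text \<open>A Minkowski plane is modelled as the plane real^2 equipped with an arbitrary
  norm N (every two-dimensional real normed space is linearly isometric to such a space).\<close>

definition minkowski_norm :: "(real^2 \<Rightarrow> real) \<Rightarrow> bool" where
  "minkowski_norm N \<longleftrightarrow>
     (\<forall>x. N x = 0 \<longleftrightarrow> x = 0) \<and>
     (\<forall>c x. N (c *\<^sub>R x) = \<bar>c\<bar> * N x) \<and>
     (\<forall>x y. N (x + y) \<le> N x + N y)"

definition FT_point :: "(real^2 \<Rightarrow> real) \<Rightarrow> real^2 \<Rightarrow> (real^2) list \<Rightarrow> bool" where
  "FT_point N x0 xs \<longleftrightarrow>
     (\<forall>x. (\<Sum>p\<leftarrow>xs. N (x0 - p)) \<le> (\<Sum>p\<leftarrow>xs. N (x - p)))"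

definition floating_FT_config :: "(real^2 \<Rightarrow> real) \<Rightarrow> real^2 \<Rightarrow> (real^2) list \<Rightarrow> bool" where
  "floating_FT_config N x0 xs \<longleftrightarrow> (\<forall>p\<in>set xs. p \<noteq> x0) \<and> FT_point N x0 xs"

text \<open>Pointed: there is a line H through x0 (with normal vector u) such that the relative
  interiors of all segments x0 p lie in the same open half-plane bounded by H.\<close>
definition pointed_config :: "real^2 \<Rightarrow> (real^2) list \<Rightarrow> bool" where
  "pointed_config x0 xs \<longleftrightarrow>
     (\<exists>u::real^2. u \<noteq> 0 \<and>
        (\<forall>p\<in>set xs. open_segment x0 p \<subseteq> {y. u \<bullet> (y - x0) > 0}))"

definition critical_angle :: "(real^2 \<Rightarrow> real) \<Rightarrow> real^2 \<Rightarrow> real^2 \<Rightarrow> real^2 \<Rightarrow> bool" where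
  "critical_angle N x1 x0 x2 \<longleftrightarrow> (\<exists>x3. x3 \<noteq> x0 \<and> FT_point N x0 [x1, x2, x3])"

end

theory Submission
  imports Defs
begin

text \<open>By the subdifferential sum rule, \<open>0\<close> is a Fermat-Torricelli point of \<open>a1, a2, a3\<close> iff
  there are norming functionals \<open>w\<^sub>i\<close> of the \<open>a\<^sub>i\<close> (dual norm one, \<open>w\<^sub>i \<bullet> a\<^sub>i = N a\<^sub>i\<close>)
  summing to zero; accordingly the angle \<open>a\<^sub>i o a\<^sub>j\<close> is critical iff norming functionals of
  \<open>a\<^sub>i\<close> and \<open>a\<^sub>j\<close> extend to such a zero-sum triple with some nonzero third vector.
  For a zero-sum triple the three cross products \<open>cross2 w\<^sub>i w\<^sub>j\<close> coincide and are nonzero, while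
  \<open>cross2 w w'\<close> and \<open>cross2 x x'\<close> never have opposite signs when \<open>w, w'\<close> norm \<open>x, x'\<close>; so the
  \<open>a\<^sub>i\<close> are consistently oriented, which rules out a pointed configuration. Conversely, a
  non-pointed triple is cyclically oriented or contains two opposite vectors. Norming functionals
  are monotone along sectors, so two zero-sum triples sharing a direction \<open>s\<close> can exchange
  functionals when their other directions lie in suitable sectors bounded by \<open>-s\<close>; applied to
  the triples witnessing two of the critical angles this yields the zero-sum triple for
  \<open>a1, a2, a3\<close>.\<close>

section \<open>Subgradients of a sum of convex functions\<close>

lemma convex_strict_hypograph:
  fixes h :: "'a::real_vector \<Rightarrow> real"
  assumes "concave_on UNIV h"
  shows "convex {(y, t). t < h y}"
proof (rule convexI)
  fix p q :: "'a \<times> real" and u v :: real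
  assume "p \<in> {(y, t). t < h y}" "q \<in> {(y, t). t < h y}" and uv: "0 \<le> u" "0 \<le> v" "u + v = 1"
  then obtain y t y' t' where pq: "p = (y, t)" "q = (y', t')" and t: "t < h y" "t' < h y'"
    by blast
  have "u * t + v * t' < u * h y + v * h y'"
  proof (cases "u = 0")
    case True
    then show ?thesis using uv t by simp
  next
    case False
    then show ?thesis using uv t by (intro add_less_le_mono mult_strict_left_mono mult_left_mono) auto
  qed
  also have "\<dots> \<le> h (u *\<^sub>R y + v *\<^sub>R y')"
    using concave_onD[OF assms, of v y y'] uv by (simp add: eq_diff_eq[symmetric])
  finally show "u *\<^sub>R p + v *\<^sub>R q \<in> {(y, t). t < h y}" by (simp add: pq)
qed

text \<open>Separate the epigraph of \<open>f - f x0\<close> from the strict hypograph of \<open>g x0 - g\<close>.\<close>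

lemma convex_sum_minimum_separating_hyperplane:
  fixes f g :: "'a::euclidean_space \<Rightarrow> real"
  assumes f: "convex_on UNIV f" and g: "convex_on UNIV g"
    and min: "\<And>x. f x0 + g x0 \<le> f x + g x"
  obtains w c b where "(w, c) \<noteq> 0" and "\<And>y. w \<bullet> y + c * (f y - f x0) \<le> b"
    and "\<And>t. 0 \<le> t \<Longrightarrow> w \<bullet> x0 + c * t \<le> b"
    and "\<And>y t. t < g x0 - g y \<Longrightarrow> b \<le> w \<bullet> y + c * t"
proof -
  define S where "S = epigraph UNIV (\<lambda>y. f y - f x0)"
  define T :: "('a \<times> real) set" where "T = {(y, t). t < g x0 - g y}"
  have "convex S"
    unfolding S_def by (intro convex_epigraphI convex_on_diff f) (simp add: concave_on_const)
  moreover have "convex T"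
    unfolding T_def by (rule convex_strict_hypograph, rule concave_on_diff) (simp_all add: concave_on_const g)
  moreover have "(x0, 0) \<in> S" "(x0, -1) \<in> T"
    by (simp_all add: S_def T_def mem_epigraph)
  moreover have "S \<inter> T = {}"
  proof safe
    fix y t assume "(y, t) \<in> S" "(y, t) \<in> T"
    then show "(y, t) \<in> {}" using min[of y] by (simp add: S_def T_def mem_epigraph)
  qed
  ultimately obtain a b where "a \<noteq> 0" and S: "\<forall>p\<in>S. a \<bullet> p \<le> b" and T: "\<forall>p\<in>T. b \<le> a \<bullet> p"
    using separating_hyperplane_sets by (metis empty_iff)
  obtain w c where a: "a = (w, c)" by fastforce
  show thesis
  proof (rule that)
    show "(w, c) \<noteq> 0" using \<open>a \<noteq> 0\<close> by (simp add: a)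
    show "w \<bullet> y + c * (f y - f x0) \<le> b" for y
      using S[rule_format, of "(y, f y - f x0)"] by (simp add: a S_def mem_epigraph)
    show "w \<bullet> x0 + c * t \<le> b" if "0 \<le> t" for t
      using S[rule_format, of "(x0, t)"] that by (simp add: a S_def mem_epigraph)
    show "b \<le> w \<bullet> y + c * t" if "t < g x0 - g y" for y t
      using T[rule_format, of "(y, t)"] that by (simp add: a T_def)
  qed
qed

text \<open>Both functions are finite everywhere, so the separating hyperplane is not vertical.\<close>

lemma convex_sum_minimum_separation:
  fixes f g :: "'a::euclidean_space \<Rightarrow> real"
  assumes "convex_on UNIV f" "convex_on UNIV g" "\<And>x. f x0 + g x0 \<le> f x + g x"
  obtains c w where "c < 0" and "\<And>y. w \<bullet> (y - x0) + c * (f y - f x0) \<le> 0"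
    and "\<And>y t. t < g x0 - g y \<Longrightarrow> 0 \<le> w \<bullet> (y - x0) + c * t"
proof -
  obtain w c b where "(w, c) \<noteq> 0" and Sy: "\<And>y. w \<bullet> y + c * (f y - f x0) \<le> b"
    and St: "\<And>t. 0 \<le> t \<Longrightarrow> w \<bullet> x0 + c * t \<le> b"
    and Ty: "\<And>y t. t < g x0 - g y \<Longrightarrow> b \<le> w \<bullet> y + c * t"
    using convex_sum_minimum_separating_hyperplane[OF assms] by metis
  have "c \<le> 0"
  proof (rule ccontr)
    assume "\<not> c \<le> 0"
    moreover have "w \<bullet> x0 \<le> b" using St[of 0] by simp
    ultimately show False using St[of "(b - w \<bullet> x0) / c + 1"] by (simp add: distrib_left)
  qed
  moreover have "c \<noteq> 0"
  proof
    assume "c = 0"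
    then have wb: "w \<bullet> y \<le> b" for y using Sy[of y] by simp
    have "w \<noteq> 0" using \<open>(w, c) \<noteq> 0\<close> \<open>c = 0\<close> by (simp add: zero_prod_def)
    then have "w \<bullet> (((\<bar>b\<bar> + 1) / (w \<bullet> w)) *\<^sub>R w) = \<bar>b\<bar> + 1" by simp
    then show False using wb[of "((\<bar>b\<bar> + 1) / (w \<bullet> w)) *\<^sub>R w"] by linarith
  qed
  ultimately have "c < 0" by simp
  have "b = w \<bullet> x0"
  proof (rule antisym)
    show "w \<bullet> x0 \<le> b" using St[of 0] by simp
    show "b \<le> w \<bullet> x0"
    proof (rule field_le_epsilon)
      fix e :: real assume "0 < e"
      then have "e / c < g x0 - g x0" using \<open>c < 0\<close> by (simp add: divide_pos_neg)
      then show "b \<le> w \<bullet> x0 + e" using Ty[of "e / c" x0] \<open>c < 0\<close> by simp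
    qed
  qed
  show thesis
  proof (rule that[OF \<open>c < 0\<close>])
    show "w \<bullet> (y - x0) + c * (f y - f x0) \<le> 0" for y
      using Sy[of y] \<open>b = w \<bullet> x0\<close> by (simp add: inner_diff_right)
    show "0 \<le> w \<bullet> (y - x0) + c * t" if "t < g x0 - g y" for y t
      using Ty[OF that] \<open>b = w \<bullet> x0\<close> by (simp add: inner_diff_right)
  qed
qed

lemma convex_sum_minimum_subgradient:
  fixes f g :: "'a::euclidean_space \<Rightarrow> real"
  assumes "convex_on UNIV f" "convex_on UNIV g" "\<And>x. f x0 + g x0 \<le> f x + g x"
  obtains v where "\<And>y. f x0 + v \<bullet> (y - x0) \<le> f y" and "\<And>y. g x0 - v \<bullet> (y - x0) \<le> g y"
proof -
  obtain c w where "c < 0" and S: "\<And>y. w \<bullet> (y - x0) + c * (f y - f x0) \<le> 0"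
    and T: "\<And>y t. t < g x0 - g y \<Longrightarrow> 0 \<le> w \<bullet> (y - x0) + c * t"
    using convex_sum_minimum_separation[OF assms] by metis
  define v where "v = (- 1 / c) *\<^sub>R w"
  have v: "v \<bullet> (y - x0) = w \<bullet> (y - x0) / (- c)" for y
    by (simp add: v_def)
  show thesis
  proof
    fix y
    have "w \<bullet> (y - x0) / (- c) \<le> f y - f x0"
      using S[of y] \<open>c < 0\<close> by (subst pos_divide_le_eq) (auto simp: algebra_simps)
    then show "f x0 + v \<bullet> (y - x0) \<le> f y" by (simp add: v)
    have "- (w \<bullet> (y - x0)) \<le> c * (g x0 - g y)"
    proof (rule field_le_epsilon)
      fix e :: real assume "0 < e"
      then have "g x0 - g y + e / c < g x0 - g y" using \<open>c < 0\<close> by (simp add: divide_pos_neg)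
      then have "0 \<le> w \<bullet> (y - x0) + c * (g x0 - g y + e / c)" by (rule T)
      then show "- (w \<bullet> (y - x0)) \<le> c * (g x0 - g y) + e"
        using \<open>c < 0\<close> by (simp add: distrib_left)
    qed
    then have "g x0 - g y \<le> w \<bullet> (y - x0) / (- c)"
      using \<open>c < 0\<close> by (subst pos_le_divide_eq) (auto simp: algebra_simps)
    then show "g x0 - v \<bullet> (y - x0) \<le> g y" by (simp add: v)
  qed
qed

lemma convex_on_inner_diff: "convex_on UNIV (\<lambda>y. v \<bullet> (y - x0))"
  by (rule convex_onI) (simp_all add: inner_diff_right inner_add_right algebra_simps)

lemma convex_sum3_minimum_subgradients:
  fixes f1 f2 f3 :: "'a::euclidean_space \<Rightarrow> real"
  assumes convex: "convex_on UNIV f1" "convex_on UNIV f2" "convex_on UNIV f3"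
    and min: "\<And>x. f1 x0 + f2 x0 + f3 x0 \<le> f1 x + f2 x + f3 x"
  obtains v1 v2 v3 where "v1 + v2 + v3 = 0" and "\<And>y. f1 x0 + v1 \<bullet> (y - x0) \<le> f1 y"
    and "\<And>y. f2 x0 + v2 \<bullet> (y - x0) \<le> f2 y" and "\<And>y. f3 x0 + v3 \<bullet> (y - x0) \<le> f3 y"
proof -
  have "convex_on UNIV (\<lambda>x. f2 x + f3 x)" using convex by (intro convex_on_add)
  moreover have "f1 x0 + (f2 x0 + f3 x0) \<le> f1 x + (f2 x + f3 x)" for x
    using min[of x] by (simp add: add.assoc)
  ultimately obtain v1 where v1: "\<And>y. f1 x0 + v1 \<bullet> (y - x0) \<le> f1 y"
    and f23: "\<And>y. f2 x0 + f3 x0 - v1 \<bullet> (y - x0) \<le> f2 y + f3 y"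
    using convex_sum_minimum_subgradient[OF convex(1)] by blast
  have "convex_on UNIV (\<lambda>y. f3 y + v1 \<bullet> (y - x0))"
    using convex(3) convex_on_inner_diff by (intro convex_on_add)
  moreover have "f2 x0 + (f3 x0 + v1 \<bullet> (x0 - x0)) \<le> f2 x + (f3 x + v1 \<bullet> (x - x0))" for x
    using f23[of x] by simp
  ultimately obtain v2 where v2: "\<And>y. f2 x0 + v2 \<bullet> (y - x0) \<le> f2 y"
    and f3: "\<And>y. f3 x0 + v1 \<bullet> (x0 - x0) - v2 \<bullet> (y - x0) \<le> f3 y + v1 \<bullet> (y - x0)"
    using convex_sum_minimum_subgradient[OF convex(2)] by blast
  show thesis
  proof
    show "v1 + v2 + (- v1 - v2) = 0" by simp
    show "f3 x0 + (- v1 - v2) \<bullet> (y - x0) \<le> f3 y" for y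
      using f3[of y] by (simp add: inner_diff_left)
  qed (fact v1 v2)+
qed

section \<open>Orientation and pointed triples in the plane\<close>

definition cross2 :: "real^2 \<Rightarrow> real^2 \<Rightarrow> real" where
  "cross2 x y = x$1 * y$2 - x$2 * y$1"

lemma cross2_antisym: "cross2 y x = - cross2 x y"
  by (simp add: cross2_def)

lemma cross2_self [simp]: "cross2 x x = 0"
  and cross2_minus_left [simp]: "cross2 (- x) y = - cross2 x y"
  and cross2_minus_right [simp]: "cross2 x (- y) = - cross2 x y"
  and cross2_scaleR_left [simp]: "cross2 (c *\<^sub>R x) y = c * cross2 x y"
  and cross2_scaleR_right [simp]: "cross2 x (c *\<^sub>R y) = c * cross2 x y"
  by (simp_all add: cross2_def algebra_simps)

lemma inner_real2: "x \<bullet> y = x$1 * y$1 + x$2 * y$2" for x y :: "real^2"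
  by (simp add: inner_vec_def sum_2)

lemma cross2_mult_cross2: "cross2 w w' * cross2 x x' = (w \<bullet> x) * (w' \<bullet> x') - (w \<bullet> x') * (w' \<bullet> x)"
  by (simp add: cross2_def inner_real2 algebra_simps)

lemma cross2_scaleR_expansion: "cross2 x y *\<^sub>R z = cross2 z y *\<^sub>R x + cross2 x z *\<^sub>R y"
  by (simp add: vec_eq_iff forall_2 cross2_def algebra_simps)

lemma cross2_plucker: "cross2 x y * cross2 z u + cross2 x u * cross2 y z = cross2 x z * cross2 y u"
  by (simp add: cross2_def algebra_simps)

lemma cross2_zero_sum:
  assumes "w1 + w2 + w3 = 0"
  shows "cross2 w2 w3 = cross2 w1 w2" and "cross2 w3 w1 = cross2 w1 w2"
proof -
  have "w3 = (w1 + w2 + w3) - w1 - w2" by simp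
  then have w3: "w3 = - w1 - w2" using assms by simp
  show "cross2 w2 w3 = cross2 w1 w2" "cross2 w3 w1 = cross2 w1 w2"
    unfolding w3 by (simp_all add: cross2_def algebra_simps)
qed

lemma cross2_cyclic_sum: "cross2 x y *\<^sub>R z + cross2 y z *\<^sub>R x + cross2 z x *\<^sub>R y = 0"
  by (simp add: vec_eq_iff forall_2 cross2_def algebra_simps)

lemma cross2_eq_0_imp_parallel:
  assumes "cross2 x y = 0" "x \<noteq> 0"
  shows "y = ((y \<bullet> x) / (x \<bullet> x)) *\<^sub>R x"
proof -
  have "(x \<bullet> x) *\<^sub>R y = (y \<bullet> x) *\<^sub>R x"
    using assms(1) by (simp add: vec_eq_iff forall_2 inner_real2 cross2_def algebra_simps)
  then have "(1 / (x \<bullet> x)) *\<^sub>R ((x \<bullet> x) *\<^sub>R y) = (1 / (x \<bullet> x)) *\<^sub>R ((y \<bullet> x) *\<^sub>R x)"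
    by simp
  then show ?thesis using assms(2) by simp
qed

definition in_sector :: "real^2 \<Rightarrow> real^2 \<Rightarrow> real^2 \<Rightarrow> bool" where
  "in_sector y x z \<longleftrightarrow> (\<exists>\<alpha> \<beta>. 0 < \<alpha> \<and> 0 \<le> \<beta> \<and> y = \<alpha> *\<^sub>R x + \<beta> *\<^sub>R z)"

lemma in_sector_if_cross2:
  assumes "0 < s * cross2 x z" "0 < s * cross2 y z" "0 \<le> s * cross2 x y"
  shows "in_sector y x z"
proof -
  have "cross2 x z \<noteq> 0" using assms(1) by auto
  then have "y = (1 / cross2 x z) *\<^sub>R (cross2 x z *\<^sub>R y)" by simp
  also have "\<dots> = (cross2 y z / cross2 x z) *\<^sub>R x + (cross2 x y / cross2 x z) *\<^sub>R z"
    by (simp add: cross2_scaleR_expansion[of x z y] scaleR_add_right)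
  finally have "y = (cross2 y z / cross2 x z) *\<^sub>R x + (cross2 x y / cross2 x z) *\<^sub>R z" .
  moreover have "0 < cross2 y z / cross2 x z" "0 \<le> cross2 x y / cross2 x z"
    using assms by (auto simp: zero_less_divide_iff zero_le_divide_iff zero_less_mult_iff zero_le_mult_iff)
  ultimately show ?thesis unfolding in_sector_def by blast
qed

definition opposite :: "real^2 \<Rightarrow> real^2 \<Rightarrow> bool" where
  "opposite x y \<longleftrightarrow> (\<exists>t>0. y = (- t) *\<^sub>R x)"

lemma opposite_sym: "opposite x y \<Longrightarrow> opposite y x"
proof -
  assume "opposite x y"
  then obtain t where "0 < t" "y = (- t) *\<^sub>R x" unfolding opposite_def by blast
  then have "x = (- (1 / t)) *\<^sub>R y" "0 < 1 / t" by simp_all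
  then show "opposite y x" unfolding opposite_def by blast
qed

lemma cross2_opposite: "opposite x y \<Longrightarrow> cross2 x y = 0"
  unfolding opposite_def by auto

lemma parallel_cases:
  assumes "cross2 x y = 0" "x \<noteq> 0" "y \<noteq> 0"
  obtains "opposite x y" | s where "0 < s" "y = s *\<^sub>R x"
proof -
  let ?s = "(y \<bullet> x) / (x \<bullet> x)"
  have y: "y = ?s *\<^sub>R x" using cross2_eq_0_imp_parallel[OF assms(1,2)] .
  with assms(3) have "?s \<noteq> 0" by auto
  then consider "0 < ?s" | "0 < - ?s" by linarith
  then show thesis
  proof cases
    case 2
    then have "opposite x y" unfolding opposite_def using y by (intro exI[of _ "- ?s"]) simp
    then show thesis using that(1) by blast
  qed (use that(2) y in blast)
qed

lemma codirectional_if_cross2_eq_0: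
  assumes "cross2 x y = 0" "x \<noteq> 0" "0 < u \<bullet> x" "0 < u \<bullet> y"
  obtains s where "0 < s" "y = s *\<^sub>R x"
proof
  let ?s = "(y \<bullet> x) / (x \<bullet> x)"
  show y: "y = ?s *\<^sub>R x" by (rule cross2_eq_0_imp_parallel[OF assms(1,2)])
  have "0 < ?s * (u \<bullet> x)" using assms(4) y by (metis inner_scaleR_right)
  then show "0 < ?s" using assms(3) by (rule zero_less_mult_pos2)
qed

definition pointed_triple :: "real^2 \<Rightarrow> real^2 \<Rightarrow> real^2 \<Rightarrow> bool" where
  "pointed_triple x y z \<longleftrightarrow> (\<exists>u. 0 < u \<bullet> x \<and> 0 < u \<bullet> y \<and> 0 < u \<bullet> z)"

lemma pointed_triple_rotate: "pointed_triple x y z \<longleftrightarrow> pointed_triple y z x"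
  unfolding pointed_triple_def by blast

lemma open_segment_0_subset_half_plane_iff:
  assumes "p \<noteq> 0"
  shows "open_segment 0 p \<subseteq> {y. 0 < u \<bullet> y} \<longleftrightarrow> 0 < u \<bullet> p"
proof
  assume "open_segment 0 p \<subseteq> {y. 0 < u \<bullet> y}"
  moreover have "midpoint 0 p \<in> open_segment 0 p" using assms by simp
  ultimately show "0 < u \<bullet> p" by (auto simp: midpoint_def)
qed (auto simp: in_segment)

lemma pointed_config_iff_pointed_triple:
  assumes "a1 \<noteq> 0" "a2 \<noteq> 0" "a3 \<noteq> 0"
  shows "pointed_config 0 [a1, a2, a3] \<longleftrightarrow> pointed_triple a1 a2 a3"
proof -
  have "pointed_config 0 [a1, a2, a3] \<longleftrightarrow>
      (\<exists>u. u \<noteq> 0 \<and> 0 < u \<bullet> a1 \<and> 0 < u \<bullet> a2 \<and> 0 < u \<bullet> a3)"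
    using assms by (simp add: pointed_config_def open_segment_0_subset_half_plane_iff)
  also have "\<dots> \<longleftrightarrow> pointed_triple a1 a2 a3"
    unfolding pointed_triple_def by (metis inner_zero_left less_irrefl)
  finally show ?thesis .
qed

lemma pointed_pair:
  assumes "x \<noteq> 0" "y \<noteq> 0" "\<not> opposite x y"
  obtains u where "0 < u \<bullet> x" "0 < u \<bullet> y"
proof
  have "x \<bullet> (- y) \<noteq> norm x * norm (- y)"
  proof
    assume "x \<bullet> (- y) = norm x * norm (- y)"
    then have "norm x *\<^sub>R (- y) = norm (- y) *\<^sub>R x" by (simp only: norm_cauchy_schwarz_eq)
    then have eq: "norm x *\<^sub>R y = - (norm y *\<^sub>R x)" by (simp add: minus_equation_iff[of "norm x *\<^sub>R y"])
    have "y = (1 / norm x) *\<^sub>R (norm x *\<^sub>R y)" using assms(1) by simp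
    also have "\<dots> = (- (norm y / norm x)) *\<^sub>R x" unfolding eq by simp
    finally have "y = (- (norm y / norm x)) *\<^sub>R x" .
    moreover have "0 < norm y / norm x" using assms(1,2) by simp
    ultimately show False using assms(3) unfolding opposite_def by blast
  qed
  then have cs: "0 < norm x * norm y + x \<bullet> y"
    using norm_cauchy_schwarz[of x "- y"] by simp
  let ?u = "(1 / norm x) *\<^sub>R x + (1 / norm y) *\<^sub>R y"
  have "?u \<bullet> x = (norm x * norm y + x \<bullet> y) / norm y" "?u \<bullet> y = (norm x * norm y + x \<bullet> y) / norm x"
    using assms(1,2) by (simp_all add: inner_add_left inner_commute[of y x] field_simps
        dot_square_norm power2_eq_square)
  then show "0 < ?u \<bullet> x" "0 < ?u \<bullet> y"
    using cs assms(1,2) by simp_all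
qed

lemma pointed_triple_if_cross2:
  assumes "0 < s * cross2 a1 a2" "s * cross2 a2 a3 < 0" "s * cross2 a3 a1 < 0"
    and "a1 \<noteq> 0" "a2 \<noteq> 0"
  shows "pointed_triple a1 a2 a3"
proof -
  have "\<not> opposite a1 a2" using assms(1) cross2_opposite by fastforce
  then obtain u where u: "0 < u \<bullet> a1" "0 < u \<bullet> a2" using pointed_pair assms(4,5) by blast
  have "in_sector a3 a1 a2"
    using assms(1-3) by (intro in_sector_if_cross2[of s])
      (simp_all add: cross2_antisym[of a3 a2] cross2_antisym[of a1 a3])
  then obtain \<alpha> \<beta> where "0 < \<alpha>" "0 \<le> \<beta>" "a3 = \<alpha> *\<^sub>R a1 + \<beta> *\<^sub>R a2"
    unfolding in_sector_def by blast
  then have "0 < u \<bullet> a3" using u by (simp add: inner_add_right add_pos_nonneg)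
  then show ?thesis using u unfolding pointed_triple_def by blast
qed

lemma not_pointed_triple_parallel:
  assumes "a1 \<noteq> 0" "a2 \<noteq> 0" "a3 \<noteq> 0" "\<not> pointed_triple a1 a2 a3" "cross2 a1 a2 = 0"
  shows "opposite a1 a2 \<or> opposite a1 a3"
  using assms(5)
proof (rule parallel_cases[OF _ assms(1,2)])
  fix t assume t: "0 < t" "a2 = t *\<^sub>R a1"
  show ?thesis
  proof (rule disjCI)
    assume "\<not> opposite a1 a3"
    then obtain u where "0 < u \<bullet> a1" "0 < u \<bullet> a3" using pointed_pair assms(1,3) by blast
    with t assms(4) show "opposite a1 a2" unfolding pointed_triple_def by auto
  qed
qed simp

lemma not_pointed_triple_cases:
  assumes nz: "a1 \<noteq> 0" "a2 \<noteq> 0" "a3 \<noteq> 0" and not_pointed: "\<not> pointed_triple a1 a2 a3"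
  shows "(\<exists>s. 0 < s * cross2 a1 a2 \<and> 0 < s * cross2 a2 a3 \<and> 0 < s * cross2 a3 a1)
    \<or> opposite a1 a2 \<or> opposite a1 a3 \<or> opposite a2 a3"
proof (cases "cross2 a1 a2 = 0 \<or> cross2 a2 a3 = 0 \<or> cross2 a3 a1 = 0")
  case True
  have "\<not> pointed_triple a2 a3 a1" "\<not> pointed_triple a3 a1 a2"
    using not_pointed pointed_triple_rotate by blast+
  with True show ?thesis
    using not_pointed_triple_parallel[OF nz(1,2,3) not_pointed]
      not_pointed_triple_parallel[OF nz(2,3,1)] not_pointed_triple_parallel[OF nz(3,1,2)]
      opposite_sym[of a2 a1] opposite_sym[of a3 a1] opposite_sym[of a3 a2]
    by blast
next
  case False
  define s where "s = cross2 a1 a2"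
  have s: "0 < s * cross2 a1 a2" using False by (auto simp: s_def zero_less_mult_iff neq_iff)
  have "0 < s * cross2 a2 a3 \<and> 0 < s * cross2 a3 a1"
  proof (rule ccontr)
    assume "\<not> ?thesis"
    moreover have "s * cross2 a2 a3 \<noteq> 0" "s * cross2 a3 a1 \<noteq> 0" using False s_def by simp_all
    ultimately consider "s * cross2 a2 a3 < 0" "s * cross2 a3 a1 < 0"
      | "s * cross2 a2 a3 < 0" "0 < s * cross2 a3 a1"
      | "0 < s * cross2 a2 a3" "s * cross2 a3 a1 < 0"
      by linarith
    then show False
    proof cases
      case 1
      then show False using pointed_triple_if_cross2[OF s _ _ nz(1,2)] not_pointed by blast
    next
      case 2
      then have "pointed_triple a2 a3 a1"
        using s nz by (intro pointed_triple_if_cross2[of "- s"]) simp_all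
      then show False using not_pointed pointed_triple_rotate by blast
    next
      case 3
      then have "pointed_triple a3 a1 a2"
        using s nz by (intro pointed_triple_if_cross2[of "- s"]) simp_all
      then show False using not_pointed pointed_triple_rotate by blast
    qed
  qed
  then show ?thesis using s by blast
qed

section \<open>Norming functionals and the dual form of the Fermat-Torricelli condition\<close>

locale minkowski_plane =
  fixes N :: "real^2 \<Rightarrow> real"
  assumes minkowski_norm: "minkowski_norm N"
begin

lemma norm_eq_0_iff: "N x = 0 \<longleftrightarrow> x = 0"
  and norm_scaleR: "N (c *\<^sub>R x) = \<bar>c\<bar> * N x"
  and norm_triangle: "N (x + y) \<le> N x + N y"
  using minkowski_norm unfolding minkowski_norm_def by blast+

lemma norm_minus [simp]: "N (- x) = N x"
  using norm_scaleR[of "- 1" x] by simp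

lemma norm_minus_commute: "N (x - y) = N (y - x)"
  using norm_minus[of "y - x"] by simp

lemma norm_zero [simp]: "N 0 = 0"
  using norm_eq_0_iff by blast

lemma norm_nonneg: "0 \<le> N x"
  using norm_triangle[of x "- x"] norm_eq_0_iff[of 0] by simp

lemma norm_pos: "x \<noteq> 0 \<Longrightarrow> 0 < N x"
  using norm_nonneg[of x] norm_eq_0_iff[of x] by linarith

lemma convex_on_norm_diff: "convex_on UNIV (\<lambda>x. N (x - p))"
proof (rule convex_onI)
  fix t :: real and x y :: "real^2"
  assume "0 < t" "t < 1"
  have "(1 - t) *\<^sub>R x + t *\<^sub>R y - p = (1 - t) *\<^sub>R (x - p) + t *\<^sub>R (y - p)"
    by (simp add: algebra_simps)
  then have "N ((1 - t) *\<^sub>R x + t *\<^sub>R y - p) \<le> N ((1 - t) *\<^sub>R (x - p)) + N (t *\<^sub>R (y - p))"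
    using norm_triangle by simp
  then show "N ((1 - t) *\<^sub>R x + t *\<^sub>R y - p) \<le> (1 - t) * N (x - p) + t * N (y - p)"
    using \<open>0 < t\<close> \<open>t < 1\<close> by (simp add: norm_scaleR)
qed simp

definition norming :: "real^2 \<Rightarrow> real^2 \<Rightarrow> bool" where
  "norming w x \<longleftrightarrow> (\<forall>v. w \<bullet> v \<le> N v) \<and> w \<bullet> x = N x"

lemma norming_le: "norming w x \<Longrightarrow> w \<bullet> v \<le> N v"
  and norming_eq: "norming w x \<Longrightarrow> w \<bullet> x = N x"
  unfolding norming_def by blast+

lemma norming_abs_le: "norming w x \<Longrightarrow> \<bar>w \<bullet> v\<bar> \<le> N v"
  using norming_le[of w x v] norming_le[of w x "- v"] by (simp add: abs_le_iff)

lemma norming_iff_subgradient: "norming w x \<longleftrightarrow> (\<forall>y. N x + w \<bullet> (y - x) \<le> N y)"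
proof
  assume "norming w x"
  then show "\<forall>y. N x + w \<bullet> (y - x) \<le> N y"
    by (simp add: norming_eq norming_le inner_diff_right)
next
  assume sub: "\<forall>y. N x + w \<bullet> (y - x) \<le> N y"
  have le: "w \<bullet> v \<le> N v" for v
    using sub[rule_format, of "x + v"] norm_triangle[of x v] by simp
  moreover have "N x \<le> w \<bullet> x"
    using sub[rule_format, of 0] by (simp add: norm_eq_0_iff)
  ultimately show "norming w x"
    unfolding norming_def using le[of x] by simp
qed

lemma norming_uminus:
  assumes "norming w x"
  shows "norming (- w) (- x)"
proof -
  have "(- w) \<bullet> v \<le> N v" for v using norming_le[OF assms, of "- v"] by simp
  then show ?thesis using norming_eq[OF assms] unfolding norming_def by simp
qed

lemma norming_scaleR_iff: "0 < t \<Longrightarrow> norming w (t *\<^sub>R x) \<longleftrightarrow> norming w x"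
  unfolding norming_def by (simp add: norm_scaleR)

definition zero_sum_norming :: "real^2 \<Rightarrow> real^2 \<Rightarrow> real^2 \<Rightarrow> bool" where
  "zero_sum_norming x y z \<longleftrightarrow>
     (\<exists>u v w. norming u x \<and> norming v y \<and> norming w z \<and> u + v + w = 0)"

lemma zero_sum_norming_swap: "zero_sum_norming x y z \<Longrightarrow> zero_sum_norming y x z"
  unfolding zero_sum_norming_def by (metis add.commute)

lemma zero_sum_norming_rotate: "zero_sum_norming x y z \<Longrightarrow> zero_sum_norming y z x"
  unfolding zero_sum_norming_def by (metis add.commute add.left_commute)

lemma zero_sum_norming_scaleR:
  "zero_sum_norming x y (t *\<^sub>R z) \<Longrightarrow> 0 < t \<Longrightarrow> zero_sum_norming x y z"
  unfolding zero_sum_norming_def by (simp add: norming_scaleR_iff)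

lemma norming_uminus_if_subgradient:
  assumes "\<And>y. N (0 - p) + v \<bullet> (y - 0) \<le> N (y - p)"
  shows "norming (- v) p"
proof -
  have "norming v (- p)"
    unfolding norming_iff_subgradient using assms[of "y + p" for y] by simp
  then show ?thesis using norming_uminus by fastforce
qed

lemma zero_sum_norming_if_FT_point:
  assumes "FT_point N 0 [p1, p2, p3]"
  shows "zero_sum_norming p1 p2 p3"
proof -
  have "N (0 - p1) + N (0 - p2) + N (0 - p3) \<le> N (x - p1) + N (x - p2) + N (x - p3)" for x
    using assms unfolding FT_point_def by (simp add: add.assoc)
  then obtain v1 v2 v3 where "v1 + v2 + v3 = 0"
    and "\<And>y. N (0 - p1) + v1 \<bullet> (y - 0) \<le> N (y - p1)"
    and "\<And>y. N (0 - p2) + v2 \<bullet> (y - 0) \<le> N (y - p2)"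
    and "\<And>y. N (0 - p3) + v3 \<bullet> (y - 0) \<le> N (y - p3)"
    using convex_sum3_minimum_subgradients[OF convex_on_norm_diff convex_on_norm_diff convex_on_norm_diff]
    by blast
  then have "norming (- v1) p1" "norming (- v2) p2" "norming (- v3) p3"
    by (simp_all add: norming_uminus_if_subgradient)
  moreover have "- v1 + - v2 + - v3 = - (v1 + v2 + v3)" by (simp only: minus_add_distrib)
  then have "- v1 + - v2 + - v3 = 0" using \<open>v1 + v2 + v3 = 0\<close> by simp
  ultimately show ?thesis unfolding zero_sum_norming_def by blast
qed

lemma FT_point_if_zero_sum_norming:
  assumes "zero_sum_norming p1 p2 p3"
  shows "FT_point N 0 [p1, p2, p3]"
  unfolding FT_point_def
proof
  fix x
  obtain w1 w2 w3 where w: "norming w1 p1" "norming w2 p2" "norming w3 p3" "w1 + w2 + w3 = 0"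
    using assms unfolding zero_sum_norming_def by blast
  then have "N (0 - p1) + N (0 - p2) + N (0 - p3) = w1 \<bullet> (p1 - x) + w2 \<bullet> (p2 - x) + w3 \<bullet> (p3 - x)"
    by (simp add: norming_eq inner_diff_right algebra_simps flip: inner_add_left)
  also have "\<dots> \<le> N (x - p1) + N (x - p2) + N (x - p3)"
    using norming_le[OF w(1), of "p1 - x"] norming_le[OF w(2), of "p2 - x"]
      norming_le[OF w(3), of "p3 - x"]
    by (simp add: norm_minus_commute[of _ x])
  finally show "(\<Sum>p\<leftarrow>[p1, p2, p3]. N (0 - p)) \<le> (\<Sum>p\<leftarrow>[p1, p2, p3]. N (x - p))"
    by (simp add: add.assoc)
qed

lemma FT_point_iff_zero_sum_norming:
  "FT_point N 0 [p1, p2, p3] \<longleftrightarrow> zero_sum_norming p1 p2 p3"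
  using zero_sum_norming_if_FT_point FT_point_if_zero_sum_norming by blast

lemma critical_angle_iff: "critical_angle N x 0 y \<longleftrightarrow> (\<exists>c. c \<noteq> 0 \<and> zero_sum_norming x y c)"
  unfolding critical_angle_def FT_point_iff_zero_sum_norming ..

lemma critical_angle_sym: "critical_angle N x 0 y \<Longrightarrow> critical_angle N y 0 x"
  unfolding critical_angle_iff using zero_sum_norming_swap by blast

section \<open>Orientation of zero-sum norming triples\<close>

lemma cross2_norming_nonneg:
  assumes "norming w x" "norming w' x'"
  shows "0 \<le> cross2 w w' * cross2 x x'"
proof -
  have "(w \<bullet> x') * (w' \<bullet> x) \<le> \<bar>w \<bullet> x'\<bar> * \<bar>w' \<bullet> x\<bar>"
    by (simp flip: abs_mult)
  also have "\<dots> \<le> N x' * N x"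
    using norming_abs_le[OF assms(1)] norming_abs_le[OF assms(2)] norm_nonneg by (intro mult_mono) auto
  finally show ?thesis
    using cross2_mult_cross2[of w w' x x'] norming_eq[OF assms(1)] norming_eq[OF assms(2)]
    by (simp add: mult.commute)
qed

lemma norming_scaleR_abs_eq_1:
  assumes "norming w x" "norming (c *\<^sub>R w) y" "x \<noteq> 0" "y \<noteq> 0"
  shows "\<bar>c\<bar> = 1"
proof -
  have "\<bar>c\<bar> * N x \<le> N x"
    using norming_abs_le[OF assms(2), of x] norming_eq[OF assms(1)] norm_nonneg[of x]
    by (simp add: abs_mult)
  moreover have "N y \<le> \<bar>c\<bar> * N y"
  proof -
    have "N y = c * (w \<bullet> y)" using norming_eq[OF assms(2)] by simp
    also have "\<dots> \<le> \<bar>c\<bar> * \<bar>w \<bullet> y\<bar>" by (simp flip: abs_mult)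
    also have "\<dots> \<le> \<bar>c\<bar> * N y" using norming_abs_le[OF assms(1)] by (simp add: mult_left_mono)
    finally show ?thesis .
  qed
  ultimately show ?thesis using norm_pos[OF assms(3)] norm_pos[OF assms(4)] by simp
qed

lemma zero_sum_norming_cross2_ne_0:
  assumes w: "norming w1 a1" "norming w2 a2" "norming w3 a3" "w1 + w2 + w3 = 0"
    and nz: "a1 \<noteq> 0" "a2 \<noteq> 0" "a3 \<noteq> 0"
  shows "cross2 w1 w2 \<noteq> 0"
proof
  assume "cross2 w1 w2 = 0"
  moreover have "cross2 w1 w3 = 0"
    using cross2_zero_sum(2)[OF w(4)] \<open>cross2 w1 w2 = 0\<close> cross2_antisym[of w1 w3] by simp
  moreover have "w1 \<noteq> 0" using norming_eq[OF w(1)] norm_pos[OF nz(1)] by auto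
  ultimately obtain c2 c3 where c: "w2 = c2 *\<^sub>R w1" "w3 = c3 *\<^sub>R w1"
    using cross2_eq_0_imp_parallel by blast
  then have "\<bar>c2\<bar> = 1" "\<bar>c3\<bar> = 1"
    using norming_scaleR_abs_eq_1 w nz by blast+
  moreover have "(1 + c2 + c3) *\<^sub>R w1 = 0"
    using w(4) by (simp add: c algebra_simps)
  ultimately show False using \<open>w1 \<noteq> 0\<close> by (auto simp: abs_if split: if_splits)
qed

text \<open>The common sign \<open>d\<close> is the cross product of the functionals.\<close>

lemma zero_sum_norming_orientation:
  assumes "zero_sum_norming a1 a2 a3" "a1 \<noteq> 0" "a2 \<noteq> 0" "a3 \<noteq> 0"
  obtains d where "d \<noteq> 0" "0 \<le> d * cross2 a1 a2" "0 \<le> d * cross2 a2 a3" "0 \<le> d * cross2 a3 a1"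
proof -
  obtain w1 w2 w3 where w: "norming w1 a1" "norming w2 a2" "norming w3 a3" "w1 + w2 + w3 = 0"
    using assms(1) unfolding zero_sum_norming_def by blast
  show thesis
  proof
    show "cross2 w1 w2 \<noteq> 0" by (rule zero_sum_norming_cross2_ne_0[OF w assms(2-4)])
    show "0 \<le> cross2 w1 w2 * cross2 a1 a2" "0 \<le> cross2 w1 w2 * cross2 a2 a3"
      "0 \<le> cross2 w1 w2 * cross2 a3 a1"
      using cross2_norming_nonneg[OF w(1,2)] cross2_norming_nonneg[OF w(2,3)]
        cross2_norming_nonneg[OF w(3,1)] cross2_zero_sum[OF w(4)] by simp_all
  qed
qed

lemma zero_sum_norming_same_orientation:
  assumes "zero_sum_norming a1 a2 a3" "a1 \<noteq> 0" "a2 \<noteq> 0" "a3 \<noteq> 0" "0 < s * cross2 a1 a2"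
  shows "0 \<le> s * cross2 a2 a3" "0 \<le> s * cross2 a3 a1"
proof -
  obtain d where "d \<noteq> 0" "0 \<le> d * cross2 a1 a2" "0 \<le> d * cross2 a2 a3" "0 \<le> d * cross2 a3 a1"
    using zero_sum_norming_orientation assms(1-4) by blast
  with assms(5) show "0 \<le> s * cross2 a2 a3" "0 \<le> s * cross2 a3 a1"
    by (auto simp: zero_less_mult_iff zero_le_mult_iff)
qed

lemma not_zero_sum_norming_same:
  assumes "x \<noteq> 0"
  shows "\<not> zero_sum_norming x x x"
proof
  assume "zero_sum_norming x x x"
  then obtain u v w where n: "norming u x" "norming v x" "norming w x" and sum: "u + v + w = 0"
    unfolding zero_sum_norming_def by blast
  have "(u + v + w) \<bullet> x = 3 * N x" using n by (simp add: inner_add_left norming_eq)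
  then show False using sum norm_pos[OF assms] by simp
qed

lemma not_pointed_triple_if_zero_sum_norming:
  assumes zs: "zero_sum_norming a1 a2 a3" and nz: "a1 \<noteq> 0" "a2 \<noteq> 0" "a3 \<noteq> 0"
  shows "\<not> pointed_triple a1 a2 a3"
proof
  assume "pointed_triple a1 a2 a3"
  then obtain u where u: "0 < u \<bullet> a1" "0 < u \<bullet> a2" "0 < u \<bullet> a3"
    unfolding pointed_triple_def by blast
  obtain d where d: "d \<noteq> 0" "0 \<le> d * cross2 a1 a2" "0 \<le> d * cross2 a2 a3" "0 \<le> d * cross2 a3 a1"
    using zero_sum_norming_orientation zs nz by blast
  have "u \<bullet> (d *\<^sub>R (cross2 a1 a2 *\<^sub>R a3 + cross2 a2 a3 *\<^sub>R a1 + cross2 a3 a1 *\<^sub>R a2)) = 0"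
    by (simp only: cross2_cyclic_sum) simp
  then have "(d * cross2 a1 a2) * (u \<bullet> a3) + (d * cross2 a2 a3) * (u \<bullet> a1)
      + (d * cross2 a3 a1) * (u \<bullet> a2) = 0"
    by (simp add: inner_add_right algebra_simps)
  moreover have "0 \<le> (d * cross2 a1 a2) * (u \<bullet> a3)" "0 \<le> (d * cross2 a2 a3) * (u \<bullet> a1)"
    "0 \<le> (d * cross2 a3 a1) * (u \<bullet> a2)"
    using d u by simp_all
  ultimately have "(d * cross2 a1 a2) * (u \<bullet> a3) = 0" "(d * cross2 a3 a1) * (u \<bullet> a2) = 0"
    by linarith+
  then have "cross2 a1 a2 = 0" "cross2 a1 a3 = 0"
    using d(1) u cross2_antisym[of a1 a3] by auto
  obtain s where "0 < s" "a2 = s *\<^sub>R a1"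
    using codirectional_if_cross2_eq_0[OF \<open>cross2 a1 a2 = 0\<close> nz(1) u(1,2)] .
  obtain s' where "0 < s'" "a3 = s' *\<^sub>R a1"
    using codirectional_if_cross2_eq_0[OF \<open>cross2 a1 a3 = 0\<close> nz(1) u(1,3)] .
  have "zero_sum_norming a1 (s *\<^sub>R a1) a1"
    using zs zero_sum_norming_scaleR \<open>0 < s'\<close> \<open>a2 = s *\<^sub>R a1\<close> \<open>a3 = s' *\<^sub>R a1\<close> by blast
  then have "zero_sum_norming a1 a1 (s *\<^sub>R a1)" using zero_sum_norming_rotate by blast
  then have "zero_sum_norming a1 a1 a1" using zero_sum_norming_scaleR \<open>0 < s\<close> by blast
  then show False using not_zero_sum_norming_same nz(1) by blast
qed

section \<open>Exchanging norming functionals between triples\<close>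

lemma norming_in_sector:
  assumes "norming w1 y1" "norming w2 y2" "in_sector y1 d y2"
  shows "0 \<le> (w1 - w2) \<bullet> d" and "(w1 - w2) \<bullet> d = 0 \<Longrightarrow> norming w2 y1"
proof -
  obtain \<alpha> \<beta> where "0 < \<alpha>" "0 \<le> \<beta>" and y1: "y1 = \<alpha> *\<^sub>R d + \<beta> *\<^sub>R y2"
    using assms(3) unfolding in_sector_def by blast
  have "\<alpha> * ((w1 - w2) \<bullet> d) = (w1 - w2) \<bullet> (y1 - \<beta> *\<^sub>R y2)"
    by (simp add: y1)
  also have "\<dots> = (N y1 - w2 \<bullet> y1) + \<beta> * (N y2 - w1 \<bullet> y2)"
    using norming_eq[OF assms(1)] norming_eq[OF assms(2)] by (simp add: inner_diff_left inner_diff_right algebra_simps)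
  finally have key: "\<alpha> * ((w1 - w2) \<bullet> d) = (N y1 - w2 \<bullet> y1) + \<beta> * (N y2 - w1 \<bullet> y2)" .
  have gap: "0 \<le> N y1 - w2 \<bullet> y1" "0 \<le> \<beta> * (N y2 - w1 \<bullet> y2)"
    using norming_le[OF assms(2), of y1] norming_le[OF assms(1), of y2] \<open>0 \<le> \<beta>\<close> by simp_all
  have "0 \<le> \<alpha> * ((w1 - w2) \<bullet> d)" using key gap by linarith
  then show "0 \<le> (w1 - w2) \<bullet> d" using \<open>0 < \<alpha>\<close> by (simp add: zero_le_mult_iff)
  show "norming w2 y1" if "(w1 - w2) \<bullet> d = 0"
  proof -
    have "0 = (N y1 - w2 \<bullet> y1) + \<beta> * (N y2 - w1 \<bullet> y2)" using key that by simp
    then have "w2 \<bullet> y1 = N y1" using gap by linarith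
    then show ?thesis using norming_le[OF assms(2)] unfolding norming_def by simp
  qed
qed

lemma zero_sum_norming_exchange:
  assumes "zero_sum_norming x s b" "zero_sum_norming e s y"
    and "in_sector x (- s) e" "in_sector b (- s) y"
  shows "zero_sum_norming x s y"
proof -
  obtain p q r where pqr: "norming p x" "norming q s" "norming r b" "p + q + r = 0"
    using assms(1) unfolding zero_sum_norming_def by blast
  obtain p' q' r' where pqr': "norming p' e" "norming q' s" "norming r' y" "p' + q' + r' = 0"
    using assms(2) unfolding zero_sum_norming_def by blast
  have "(p + q + r) \<bullet> s = 0" "(p' + q' + r') \<bullet> s = 0"
    using pqr(4) pqr'(4) by simp_all
  then have "(p - p') \<bullet> (- s) + (r - r') \<bullet> (- s) = 0"
    using norming_eq[OF pqr(2)] norming_eq[OF pqr'(2)]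
    by (simp add: inner_add_left inner_diff_left)
  then have "(p - p') \<bullet> (- s) = 0"
    using norming_in_sector(1)[OF pqr(1) pqr'(1) assms(3)]
      norming_in_sector(1)[OF pqr(3) pqr'(3) assms(4)] by linarith
  then have "norming p' x" by (rule norming_in_sector(2)[OF pqr(1) pqr'(1) assms(3)])
  then show ?thesis using pqr' unfolding zero_sum_norming_def by blast
qed

lemma zero_sum_norming_if_cross2_eq_0:
  assumes nz: "a1 \<noteq> 0" "a2 \<noteq> 0" "a3 \<noteq> 0"
    and orient: "0 < s * cross2 a1 a2" "0 < s * cross2 a2 a3"
    and b: "zero_sum_norming a1 a2 b" "b \<noteq> 0" and "cross2 a3 b = 0"
  shows "zero_sum_norming a1 a2 a3"
proof -
  obtain c where c: "b = c *\<^sub>R a3"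
    using cross2_eq_0_imp_parallel[OF \<open>cross2 a3 b = 0\<close> nz(3)] by blast
  have "0 \<le> s * cross2 a2 b" by (rule zero_sum_norming_same_orientation(1)[OF b(1) nz(1,2) b(2) orient(1)])
  then have "0 \<le> c * (s * cross2 a2 a3)" by (simp add: c algebra_simps)
  moreover have "c \<noteq> 0" using b(2) c by auto
  ultimately have "0 < c" using orient(2) by (simp add: zero_le_mult_iff)
  then show ?thesis using b(1) c zero_sum_norming_scaleR by blast
qed

lemma zero_sum_norming_cyclic_exchange_strict:
  assumes nz: "a1 \<noteq> 0" "a2 \<noteq> 0" "a3 \<noteq> 0"
    and orient: "0 < s * cross2 a1 a2" "0 < s * cross2 a2 a3" "0 < s * cross2 a3 a1"
    and b: "zero_sum_norming a1 a2 b" "b \<noteq> 0" and e: "zero_sum_norming a2 a3 e" "e \<noteq> 0"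
    and "0 < s * cross2 a1 e" "0 < s * cross2 a3 b"
  shows "zero_sum_norming a1 a2 a3"
proof -
  have "0 \<le> s * cross2 a2 b" by (rule zero_sum_norming_same_orientation(1)[OF b(1) nz(1,2) b(2) orient(1)])
  have "0 \<le> s * cross2 a3 e" by (rule zero_sum_norming_same_orientation(1)[OF e(1) nz(2,3) e(2) orient(2)])
  have "cross2 a1 e * cross2 a2 a3 + cross2 a1 a2 * cross2 a3 e = cross2 a3 a1 * cross2 e a2"
    using cross2_plucker[of a1 e a2 a3] cross2_antisym[of a1 a3] cross2_antisym[of e a3]
    by (simp add: algebra_simps)
  then have "(s * cross2 a3 a1) * (s * cross2 e a2)
      = (s * cross2 a1 e) * (s * cross2 a2 a3) + (s * cross2 a1 a2) * (s * cross2 a3 e)"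
    by (metis (no_types, lifting) distrib_left mult.commute mult.left_commute)
  also have "\<dots> > 0"
    using \<open>0 < s * cross2 a1 e\<close> orient \<open>0 \<le> s * cross2 a3 e\<close>
    by (simp add: add_pos_nonneg)
  finally have "0 < s * cross2 e a2"
    using orient(3) by (simp add: zero_less_mult_iff)
  then have "in_sector a1 (- a2) e"
    using \<open>0 < s * cross2 a1 e\<close> orient(1)
    by (intro in_sector_if_cross2[of s]) (simp_all add: cross2_antisym[of a2 e] cross2_antisym[of a2 a1])
  moreover have "in_sector b (- a2) a3"
    using \<open>0 < s * cross2 a3 b\<close> orient(2) \<open>0 \<le> s * cross2 a2 b\<close>
    by (intro in_sector_if_cross2[of "- s"]) (simp_all add: cross2_antisym[of b a3])
  moreover have "zero_sum_norming e a2 a3"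
    using e(1) zero_sum_norming_rotate by blast
  ultimately show ?thesis by (intro zero_sum_norming_exchange[OF b(1)])
qed

lemma zero_sum_norming_cyclic_exchange:
  assumes nz: "a1 \<noteq> 0" "a2 \<noteq> 0" "a3 \<noteq> 0"
    and orient: "0 < s * cross2 a1 a2" "0 < s * cross2 a2 a3" "0 < s * cross2 a3 a1"
    and b: "zero_sum_norming a1 a2 b" "b \<noteq> 0" and e: "zero_sum_norming a2 a3 e" "e \<noteq> 0"
    and ge: "0 \<le> s * cross2 a1 e" "0 \<le> s * cross2 a3 b"
  shows "zero_sum_norming a1 a2 a3"
proof (cases "cross2 a3 b = 0 \<or> cross2 a1 e = 0")
  case True
  then show ?thesis
  proof
    assume "cross2 a3 b = 0"
    then show ?thesis by (rule zero_sum_norming_if_cross2_eq_0[OF nz orient(1,2) b])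
  next
    assume "cross2 a1 e = 0"
    then have "zero_sum_norming a2 a3 a1"
      by (rule zero_sum_norming_if_cross2_eq_0[OF nz(2,3,1) orient(2,3) e])
    then show ?thesis using zero_sum_norming_rotate by blast
  qed
next
  case False
  moreover have "s \<noteq> 0" using orient(1) by auto
  ultimately have "0 < s * cross2 a1 e" "0 < s * cross2 a3 b"
    using ge by (auto simp: less_le)
  then show ?thesis by (rule zero_sum_norming_cyclic_exchange_strict[OF nz orient b e])
qed

text \<open>The third vectors \<open>b\<close>, \<open>e\<close>, \<open>c\<close> of the three critical angles each lie on one side of the
  opposite \<open>a\<^sub>i\<close>; two of these sides agree, and each of the six cases is a relabelling of
  the same exchange.\<close>

lemma zero_sum_norming_if_cyclic:
  assumes nz: "a1 \<noteq> 0" "a2 \<noteq> 0" "a3 \<noteq> 0"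
    and orient: "0 < s * cross2 a1 a2" "0 < s * cross2 a2 a3" "0 < s * cross2 a3 a1"
    and crit: "critical_angle N a1 0 a2" "critical_angle N a2 0 a3" "critical_angle N a3 0 a1"
  shows "zero_sum_norming a1 a2 a3"
proof -
  obtain b e c where b: "zero_sum_norming a1 a2 b" "b \<noteq> 0"
    and e: "zero_sum_norming a2 a3 e" "e \<noteq> 0" and c: "zero_sum_norming a3 a1 c" "c \<noteq> 0"
    using crit unfolding critical_angle_iff by blast
  have orient': "0 < - s * cross2 a2 a1" "0 < - s * cross2 a3 a2" "0 < - s * cross2 a1 a3"
    using orient cross2_antisym[of a2 a1] cross2_antisym[of a3 a2] cross2_antisym[of a1 a3] by simp_all
  have swapped: "zero_sum_norming a2 a1 b" "zero_sum_norming a3 a2 e" "zero_sum_norming a1 a3 c"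
    using b(1) e(1) c(1) zero_sum_norming_swap by blast+
  define B E C where "B = s * cross2 a3 b" and "E = s * cross2 a1 e" and "C = s * cross2 a2 c"
  consider "0 \<le> E" "0 \<le> B" | "E \<le> 0" "B \<le> 0" | "0 \<le> C" "0 \<le> B" | "C \<le> 0" "B \<le> 0"
    | "0 \<le> E" "0 \<le> C" | "E \<le> 0" "C \<le> 0"
    by linarith
  then show ?thesis
  proof cases
    case 1
    then show ?thesis
      unfolding B_def E_def by (rule zero_sum_norming_cyclic_exchange[OF nz orient b e])
  next
    case 2
    then have "zero_sum_norming a3 a2 a1"
      unfolding B_def E_def
      by (intro zero_sum_norming_cyclic_exchange[OF nz(3,2,1) orient'(2,1,3) swapped(2) e(2) swapped(1) b(2)]) simp_all
    then show ?thesis using zero_sum_norming_rotate zero_sum_norming_swap by blast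
  next
    case 3
    then have "zero_sum_norming a3 a1 a2"
      unfolding B_def C_def by (intro zero_sum_norming_cyclic_exchange[OF nz(3,1,2) orient(3,1,2) c b])
    then show ?thesis using zero_sum_norming_rotate by blast
  next
    case 4
    then have "zero_sum_norming a2 a1 a3"
      unfolding B_def C_def
      by (intro zero_sum_norming_cyclic_exchange[OF nz(2,1,3) orient'(1,3,2) swapped(1) b(2) swapped(3) c(2)]) simp_all
    then show ?thesis using zero_sum_norming_swap by blast
  next
    case 5
    then have "zero_sum_norming a2 a3 a1"
      unfolding E_def C_def by (intro zero_sum_norming_cyclic_exchange[OF nz(2,3,1) orient(2,3,1) e c])
    then show ?thesis using zero_sum_norming_rotate by blast
  next
    case 6
    then have "zero_sum_norming a1 a3 a2"
      unfolding E_def C_def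
      by (intro zero_sum_norming_cyclic_exchange[OF nz(1,3,2) orient'(3,2,1) swapped(3) c(2) swapped(2) e(2)]) simp_all
    then show ?thesis using zero_sum_norming_rotate zero_sum_norming_swap by blast
  qed
qed

lemma critical_angle_codirectional:
  assumes "critical_angle N x 0 y" "x \<noteq> 0" "y = t *\<^sub>R x" "0 < t"
  shows False
proof -
  obtain c where "zero_sum_norming x y c"
    using assms(1) unfolding critical_angle_iff by blast
  then obtain u v w where "norming u x" "norming v y" "norming w c" and sum: "u + v + w = 0"
    unfolding zero_sum_norming_def by blast
  then have "norming v x" using assms(3,4) norming_scaleR_iff by blast
  have "w = - (u + v)" using minus_unique[OF sum] by simp
  then have "w \<bullet> (- x) = N x + N x"
    using norming_eq[OF \<open>norming u x\<close>] norming_eq[OF \<open>norming v x\<close>]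
    by (simp add: inner_add_left inner_diff_left)
  moreover have "w \<bullet> (- x) \<le> N x" using norming_le[OF \<open>norming w c\<close>, of "- x"] by simp
  ultimately show False using norm_pos[OF assms(2)] by simp
qed

text \<open>Negating a triple for \<open>a1, a2, b\<close> with \<open>a2\<close> opposite to \<open>a1\<close> gives a triple for
  \<open>a1, a2, -b\<close>, so the side of \<open>b\<close> relative to \<open>a1\<close> can be chosen freely.\<close>

lemma zero_sum_norming_opposite_flip:
  assumes zs: "zero_sum_norming a1 a2 b" and "b \<noteq> 0" "a1 \<noteq> 0"
    and opp: "a2 = (- t) *\<^sub>R a1" "0 < t" and "s \<noteq> 0"
  obtains b' where "zero_sum_norming a1 a2 b'" "0 < s * cross2 b' a1"
proof -
  obtain p q z where pqz: "norming p a1" "norming q a2" "norming z b" and sum: "p + q + z = 0"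
    using zs unfolding zero_sum_norming_def by blast
  have "t * (N a1 + q \<bullet> a1) = 0"
    using norming_eq[OF pqz(2)] opp by (simp add: norm_scaleR algebra_simps)
  then have "q \<bullet> a1 = - N a1" using opp(2) by simp
  moreover have "(p + q + z) \<bullet> a1 = 0" using sum by simp
  ultimately have "z \<bullet> a1 = 0" using norming_eq[OF pqz(1)] by (simp add: inner_add_left)
  have "cross2 b a1 \<noteq> 0"
  proof
    assume "cross2 b a1 = 0"
    then obtain c where "b = c *\<^sub>R a1"
      using cross2_eq_0_imp_parallel[OF _ \<open>a1 \<noteq> 0\<close>, of b] cross2_antisym[of b a1] by auto
    then have "N b = 0" using norming_eq[OF pqz(3)] \<open>z \<bullet> a1 = 0\<close> by simp
    then show False using \<open>b \<noteq> 0\<close> norm_eq_0_iff by blast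
  qed
  then have "s * cross2 b a1 \<noteq> 0" using \<open>s \<noteq> 0\<close> by simp
  then consider "0 < s * cross2 b a1" | "0 < s * cross2 (- b) a1"
    by (cases "0 < s * cross2 b a1") auto
  then show thesis
  proof cases
    case 1
    then show thesis using that zs by blast
  next
    case 2
    have "norming (- q) a1"
      using norming_uminus[OF pqz(2)] opp norming_scaleR_iff by simp
    moreover have "norming (- p) a2"
      using norming_uminus[OF pqz(1)] opp norming_scaleR_iff[of "1 / t" "- p" a2] by simp
    moreover have "norming (- z) (- b)" by (rule norming_uminus[OF pqz(3)])
    moreover have "- q + - p + - z = - (p + q + z)" by (simp add: algebra_simps)
    then have "- q + - p + - z = 0" using sum by simp
    ultimately have "zero_sum_norming a1 a2 (- b)"
      unfolding zero_sum_norming_def by blast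
    then show thesis using that 2 by blast
  qed
qed

lemma zero_sum_norming_exchange_opposite:
  assumes "zero_sum_norming x s b" "critical_angle N s 0 y"
    and "x = r *\<^sub>R (- s)" "0 < r" "in_sector b (- s) y"
  shows "zero_sum_norming x s y"
proof -
  obtain e where "zero_sum_norming s y e"
    using assms(2) unfolding critical_angle_iff by blast
  then have "zero_sum_norming e s y" using zero_sum_norming_rotate by blast
  moreover have "in_sector x (- s) e"
    unfolding in_sector_def using assms(3,4) by (intro exI[of _ r] exI[of _ 0]) simp
  ultimately show ?thesis using zero_sum_norming_exchange assms(1,5) by blast
qed

lemma zero_sum_norming_if_opposite_oriented:
  assumes nz: "a1 \<noteq> 0" "a2 \<noteq> 0" "a3 \<noteq> 0"
    and opp: "a2 = (- t) *\<^sub>R a1" "0 < t" and "cross2 a3 a1 \<noteq> 0"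
    and crit: "critical_angle N a1 0 a2" "critical_angle N a1 0 a3" "critical_angle N a2 0 a3"
  shows "zero_sum_norming a1 a2 a3"
proof -
  define s where "s = cross2 a3 a1"
  have "s \<noteq> 0" "0 < s * cross2 a3 a1"
    using \<open>cross2 a3 a1 \<noteq> 0\<close> by (auto simp: s_def zero_less_mult_iff neq_iff)
  obtain b where "zero_sum_norming a1 a2 b" "b \<noteq> 0"
    using crit(1) unfolding critical_angle_iff by blast
  then obtain B where B: "zero_sum_norming a1 a2 B" "0 < s * cross2 B a1"
    using zero_sum_norming_opposite_flip nz(1) opp \<open>s \<noteq> 0\<close> by metis
  consider "cross2 a3 B = 0" | "0 < s * cross2 a3 B" | "s * cross2 a3 B < 0"
    using \<open>s \<noteq> 0\<close> by (metis linorder_neqE_linordered_idom mult_eq_0_iff)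
  then show ?thesis
  proof cases
    case 1
    then obtain c where c: "B = c *\<^sub>R a3" using cross2_eq_0_imp_parallel nz(3) by blast
    then have "0 < c * (s * cross2 a3 a1)" using B(2) by (simp add: algebra_simps)
    then have "0 < c" using \<open>0 < s * cross2 a3 a1\<close> by (simp add: zero_less_mult_iff)
    then show ?thesis using B(1) c zero_sum_norming_scaleR by blast
  next
    case 2
    have "0 < t * (s * cross2 a3 a1)" "0 \<le> t * (s * cross2 B a1)"
      using opp(2) B(2) \<open>0 < s * cross2 a3 a1\<close> by simp_all
    then have "in_sector B (- a2) a3"
      using 2 opp(1)
      by (intro in_sector_if_cross2[of "- s"])
        (simp_all add: cross2_antisym[of B a3] cross2_antisym[of a1 B] cross2_antisym[of a1 a3]
          mult.left_commute[of s t])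
    then show ?thesis
      using zero_sum_norming_exchange_opposite[OF B(1) crit(3), of "1 / t"] opp by simp
  next
    case 3
    then have "in_sector B (- a1) a3"
      using B(2) \<open>0 < s * cross2 a3 a1\<close>
      by (intro in_sector_if_cross2[of s])
        (simp_all add: cross2_antisym[of B a3] cross2_antisym[of a1 B] cross2_antisym[of a1 a3])
    moreover have "a2 = t *\<^sub>R (- a1)" using opp(1) by simp
    ultimately have "zero_sum_norming a2 a1 a3"
      using zero_sum_norming_exchange_opposite[OF zero_sum_norming_swap[OF B(1)] crit(2)] opp(2)
      by blast
    then show ?thesis using zero_sum_norming_swap by blast
  qed
qed

lemma zero_sum_norming_if_opposite:
  assumes nz: "a1 \<noteq> 0" "a2 \<noteq> 0" "a3 \<noteq> 0" and "opposite a1 a2"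
    and crit: "critical_angle N a1 0 a2" "critical_angle N a1 0 a3" "critical_angle N a2 0 a3"
  shows "zero_sum_norming a1 a2 a3"
proof -
  obtain t where t: "0 < t" "a2 = (- t) *\<^sub>R a1"
    using \<open>opposite a1 a2\<close> unfolding opposite_def by blast
  have "cross2 a3 a1 \<noteq> 0"
  proof
    assume "cross2 a3 a1 = 0"
    then have "cross2 a1 a3 = 0" using cross2_antisym[of a3 a1] by simp
    then show False
    proof (rule parallel_cases[OF _ nz(1,3)])
      assume "opposite a1 a3"
      then obtain t' where "0 < t'" "a3 = (- t') *\<^sub>R a1" unfolding opposite_def by blast
      then have "a3 = (t' / t) *\<^sub>R a2" "0 < t' / t" using t by simp_all
      then show False using critical_angle_codirectional[OF crit(3) nz(2)] by blast
    qed (use critical_angle_codirectional[OF crit(2) nz(1)] in blast)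
  qed
  then show ?thesis using zero_sum_norming_if_opposite_oriented[OF nz t(2,1) _ crit] by blast
qed

lemma zero_sum_norming_iff_critical:
  assumes nz: "a1 \<noteq> 0" "a2 \<noteq> 0" "a3 \<noteq> 0"
  shows "zero_sum_norming a1 a2 a3 \<longleftrightarrow> \<not> pointed_triple a1 a2 a3 \<and>
    critical_angle N a1 0 a2 \<and> critical_angle N a1 0 a3 \<and> critical_angle N a2 0 a3"
proof
  assume zs: "zero_sum_norming a1 a2 a3"
  then have "zero_sum_norming a1 a3 a2" "zero_sum_norming a2 a3 a1"
    using zero_sum_norming_rotate zero_sum_norming_swap by blast+
  then show "\<not> pointed_triple a1 a2 a3 \<and>
    critical_angle N a1 0 a2 \<and> critical_angle N a1 0 a3 \<and> critical_angle N a2 0 a3"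
    using zs not_pointed_triple_if_zero_sum_norming nz unfolding critical_angle_iff by blast
next
  assume "\<not> pointed_triple a1 a2 a3 \<and>
    critical_angle N a1 0 a2 \<and> critical_angle N a1 0 a3 \<and> critical_angle N a2 0 a3"
  then have np: "\<not> pointed_triple a1 a2 a3" and crit: "critical_angle N a1 0 a2"
    "critical_angle N a1 0 a3" "critical_angle N a2 0 a3" by blast+
  then have crit': "critical_angle N a3 0 a1" "critical_angle N a2 0 a1" "critical_angle N a3 0 a2"
    using critical_angle_sym by blast+
  from not_pointed_triple_cases[OF nz np] show "zero_sum_norming a1 a2 a3"
  proof (elim disjE exE conjE)
    fix s assume "0 < s * cross2 a1 a2" "0 < s * cross2 a2 a3" "0 < s * cross2 a3 a1"
    then show ?thesis using zero_sum_norming_if_cyclic[OF nz] crit(1,3) crit'(1) by blast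
  next
    assume "opposite a1 a2"
    then show ?thesis using zero_sum_norming_if_opposite[OF nz] crit by blast
  next
    assume "opposite a1 a3"
    then have "zero_sum_norming a1 a3 a2"
      using zero_sum_norming_if_opposite[OF nz(1,3,2)] crit(2,1) crit'(3) by blast
    then show ?thesis using zero_sum_norming_rotate zero_sum_norming_swap by blast
  next
    assume "opposite a2 a3"
    then have "zero_sum_norming a2 a3 a1"
      using zero_sum_norming_if_opposite[OF nz(2,3,1)] crit(3) crit'(2,1) by blast
    then show ?thesis using zero_sum_norming_rotate by blast
  qed
qed

end

theorem theorem5p5:
  fixes N :: "real^2 \<Rightarrow> real" and a :: "nat \<Rightarrow> real^2"
  assumes "minkowski_norm N"
    and "\<forall>i\<in>{1,2,3}. a i \<noteq> 0"
  shows "floating_FT_config N 0 [a 1, a 2, a 3] \<longleftrightarrow>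
           \<not> pointed_config 0 [a 1, a 2, a 3] \<and>
           (\<forall>i\<in>{1::nat,2,3}. \<forall>j\<in>{1,2,3}. i \<noteq> j \<longrightarrow> critical_angle N (a i) 0 (a j))"
proof -
  interpret minkowski_plane N by (rule minkowski_plane.intro) fact
  have nz: "a 1 \<noteq> 0" "a 2 \<noteq> 0" "a 3 \<noteq> 0" using assms(2) by auto
  have "floating_FT_config N 0 [a 1, a 2, a 3] \<longleftrightarrow> zero_sum_norming (a 1) (a 2) (a 3)"
    using nz by (simp add: floating_FT_config_def FT_point_iff_zero_sum_norming)
  moreover have "(\<forall>i\<in>{1::nat,2,3}. \<forall>j\<in>{1,2,3}. i \<noteq> j \<longrightarrow> critical_angle N (a i) 0 (a j)) \<longleftrightarrow>
      critical_angle N (a 1) 0 (a 2) \<and> critical_angle N (a 1) 0 (a 3) \<and> critical_angle N (a 2) 0 (a 3)"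
    using critical_angle_sym by auto
  ultimately show ?thesis
    using zero_sum_norming_iff_critical[OF nz] pointed_config_iff_pointed_triple[OF nz] by simp
qed

end
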